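(* Let $X=(X_k)$ be a sequence of fuzzy numbers, $\beta\in(0,1]$, $p>0$, $m\ge0$ an integer and $\theta$ a lacunary sequence. Then: (i) If $X\in N_\theta^\beta(p,F,\Delta^m)$, then $X\in S_\theta^\beta(F,\Delta^m)$ and the limits are the same. (ii) If $X\in N_\theta^\beta(p,F,\Delta^m)$, then $X\in S_\theta(F,\Delta^m)$ and the limits are the same.
   Context: A fuzzy number is a map $X:\mathbb{R}\to[0,1]$ which is normal, fuzzy convex, upper semicontinuous, with compact closure of $\{t:X(t)>0\}$; $L(\mathbb{R})$ is the set of fuzzy numbers. Level sets $[X]^\alpha=\{t:X(t)\ge\alpha\}$ ($\alpha\in(0,1]$), $[X]^0=\overline{\{t:X(t)>0\}}$, are compact intervals $[u^\alpha,v^\alpha]$. Subtraction: $[X-Y]^\alpha=[u_1^\alpha-v_2^\alpha,v_1^\alpha-u_2^\alpha]$. Metric: $d(X,Y)=\sup_{\alpha\in[0,1]}\max\{|u_1^\alpha-u_2^\alpha|,|v_1^\alpha-v_2^\alpha|\}$. $(\Delta^0X)_k=X_k$, $(\Delta^1X)_k=X_k-X_{k+1}$, $(\Delta^mX)_k=(\Delta^1(\Delta^{m-1}X))_k$. A lacunary sequence is an increasing integer sequence $\theta=(k_r)_{r\ge0}$ with $k_0=0$, $h_r=k_r-k_{r-1}\to\infty$; $I_r=(k_{r-1},k_r]$. $S_\theta^\beta(F,\Delta^m)$: sequences $X$ with some $X_0\in L(\mathbb{R})$ (the limit) such that for all $\varepsilon>0$, $\lim_r\frac{1}{h_r^\beta}|\{k\in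 I_r:d(\Delta^mX_k,X_0)\ge\varepsilon\}|=0$; $S_\theta(F,\Delta^m)$ is the case $\beta=1$. $N_\theta^\beta(p,F,\Delta^m)$: sequences $X$ with some $X_0\in L(\mathbb{R})$ (the limit) such that $\lim_r\frac{1}{h_r^\beta}\sum_{k\in I_r}d(\Delta^mX_k,X_0)^p=0$. *)

theory Defs
  imports "HOL-Analysis.Analysis"
begin

type_synonym fuzzy = "real \<Rightarrow> real"

definition fuzzy_number :: "fuzzy \<Rightarrow> bool" where
  "fuzzy_number X \<longleftrightarrow>
     (\<forall>t. 0 \<le> X t \<and> X t \<le> 1) \<and>
     (\<exists>t. X t = 1) \<and>
     (\<forall>s t l. 0 \<le> l \<and> l \<le> 1 \<longrightarrow> min (X s) (X t) \<le> X (l * s + (1 - l) * t)) \<and>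
     (\<forall>x. \<forall>e>0. \<forall>\<^sub>F y in at x. X y < X x + e) \<and>
     compact (closure {t. X t > 0})"

definition level :: "fuzzy \<Rightarrow> real \<Rightarrow> real set" where
  "level X a = (if a > 0 then {t. X t \<ge> a} else closure {t. X t > 0})"

definition lower :: "fuzzy \<Rightarrow> real \<Rightarrow> real" where
  "lower X a = Inf (level X a)"

definition upper :: "fuzzy \<Rightarrow> real \<Rightarrow> real" where
  "upper X a = Sup (level X a)"

text \<open>Subtraction: the fuzzy number whose alpha-level sets (alpha in (0,1]) are
  [lower X a - upper Y a, upper X a - lower Y a].\<close>

definition fsub :: "fuzzy \<Rightarrow> fuzzy \<Rightarrow> fuzzy" where
  "fsub X Y t = Sup (insert 0 {a. 0 < a \<and> a \<le> 1 \<and>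
       lower X a - upper Y a \<le> t \<and> t \<le> upper X a - lower Y a})"

definition fdist :: "fuzzy \<Rightarrow> fuzzy \<Rightarrow> real" where
  "fdist X Y = (SUP a\<in>{0..1}. max \<bar>lower X a - lower Y a\<bar> \<bar>upper X a - upper Y a\<bar>)"

fun fdelta :: "nat \<Rightarrow> (nat \<Rightarrow> fuzzy) \<Rightarrow> nat \<Rightarrow> fuzzy" where
  "fdelta 0 X k = X k"
| "fdelta (Suc m) X k = fsub (fdelta m X k) (fdelta m X (Suc k))"

definition lacunary :: "(nat \<Rightarrow> nat) \<Rightarrow> bool" where
  "lacunary \<theta> \<longleftrightarrow> strict_mono \<theta> \<and> \<theta> 0 = 0 \<and>
     filterlim (\<lambda>r. \<theta> r - \<theta> (r - 1)) at_top sequentially"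

definition lac_h :: "(nat \<Rightarrow> nat) \<Rightarrow> nat \<Rightarrow> nat" where
  "lac_h \<theta> r = \<theta> r - \<theta> (r - 1)"

definition lac_I :: "(nat \<Rightarrow> nat) \<Rightarrow> nat \<Rightarrow> nat set" where
  "lac_I \<theta> r = {\<theta> (r - 1)<..\<theta> r}"

definition S_theta_lim ::
  "(nat \<Rightarrow> nat) \<Rightarrow> real \<Rightarrow> nat \<Rightarrow> (nat \<Rightarrow> fuzzy) \<Rightarrow> fuzzy \<Rightarrow> bool" where
  "S_theta_lim \<theta> \<beta> m X X0 \<longleftrightarrow>
     (\<forall>\<epsilon>>0. (\<lambda>r. real (card {k \<in> lac_I \<theta> r. fdist (fdelta m X k) X0 \<ge> \<epsilon>})
                  / real (lac_h \<theta> r) powr \<beta>) \<longlonglongrightarrow> 0)"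

definition N_theta_lim ::
  "(nat \<Rightarrow> nat) \<Rightarrow> real \<Rightarrow> real \<Rightarrow> nat \<Rightarrow> (nat \<Rightarrow> fuzzy) \<Rightarrow> fuzzy \<Rightarrow> bool" where
  "N_theta_lim \<theta> \<beta> p m X X0 \<longleftrightarrow>
     (\<lambda>r. (\<Sum>k\<in>lac_I \<theta> r. fdist (fdelta m X k) X0 powr p)
             / real (lac_h \<theta> r) powr \<beta>) \<longlonglongrightarrow> 0"

end

theory Submission
  imports Defs
begin

text \<open>Markov's inequality block by block: on each block I_r, the number of k with
  d(\<Delta>^m X_k, X_0) \<ge> \<epsilon> is at most \<epsilon>^-p times the sum of the p-th powers of these
  distances, so N_\<theta>^\<beta> convergence forces S_\<theta>^\<beta> convergence for every \<beta>. Since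
  h_r^\<beta> \<le> h_r for \<beta> \<le> 1, S_\<theta>^\<beta> convergence in turn implies S_\<theta> convergence.\<close>

lemma card_ge_mult_powr_le_sum_powr:
  fixes f :: "'a \<Rightarrow> real"
  assumes "finite A" "0 < \<epsilon>" "0 < p"
  shows "real (card {k\<in>A. \<epsilon> \<le> f k}) * \<epsilon> powr p \<le> (\<Sum>k\<in>A. f k powr p)"
proof -
  let ?S = "{k\<in>A. \<epsilon> \<le> f k}"
  have "real (card ?S) * \<epsilon> powr p = (\<Sum>k\<in>?S. \<epsilon> powr p)" by simp
  also have "\<dots> \<le> (\<Sum>k\<in>?S. f k powr p)"
    by (rule sum_mono) (use assms in \<open>auto intro: powr_mono2\<close>)
  also have "\<dots> \<le> (\<Sum>k\<in>A. f k powr p)"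
    by (rule sum_mono2) (use assms in auto)
  finally show ?thesis .
qed

lemma finite_lac_I [simp]: "finite (lac_I \<theta> r)"
  by (simp add: lac_I_def)

lemma N_theta_lim_imp_S_theta_lim:
  assumes "0 < p" and "N_theta_lim \<theta> \<beta> p m X X0"
  shows "S_theta_lim \<theta> \<beta> m X X0"
  unfolding S_theta_lim_def
proof (intro allI impI)
  fix \<epsilon> :: real
  assume "0 < \<epsilon>"
  let ?s = "\<lambda>r. (\<Sum>k\<in>lac_I \<theta> r. fdist (fdelta m X k) X0 powr p) / real (lac_h \<theta> r) powr \<beta>"
  let ?c = "\<lambda>r. real (card {k \<in> lac_I \<theta> r. \<epsilon> \<le> fdist (fdelta m X k) X0})"
  show "(\<lambda>r. ?c r / real (lac_h \<theta> r) powr \<beta>) \<longlonglongrightarrow> 0"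
  proof (rule Lim_null_comparison)
    show "\<forall>\<^sub>F r in sequentially. norm (?c r / real (lac_h \<theta> r) powr \<beta>) \<le> ?s r / \<epsilon> powr p"
    proof (intro always_eventually allI)
      fix r
      have "?c r \<le> (\<Sum>k\<in>lac_I \<theta> r. fdist (fdelta m X k) X0 powr p) / \<epsilon> powr p"
        using card_ge_mult_powr_le_sum_powr[OF finite_lac_I \<open>0 < \<epsilon>\<close> \<open>0 < p\<close>,
            where f = "\<lambda>k. fdist (fdelta m X k) X0"] \<open>0 < \<epsilon>\<close>
        by (simp add: field_simps)
      then have "?c r / real (lac_h \<theta> r) powr \<beta>
          \<le> (\<Sum>k\<in>lac_I \<theta> r. fdist (fdelta m X k) X0 powr p) / \<epsilon> powr p / real (lac_h \<theta> r) powr \<beta>"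
        by (rule divide_right_mono) simp
      then show "norm (?c r / real (lac_h \<theta> r) powr \<beta>) \<le> ?s r / \<epsilon> powr p"
        by (simp add: mult.commute)
    qed
    show "(\<lambda>r. ?s r / \<epsilon> powr p) \<longlonglongrightarrow> 0"
      using assms(2) unfolding N_theta_lim_def by (rule tendsto_divide_zero)
  qed
qed

lemma S_theta_lim_exponent_mono:
  assumes "\<beta> \<le> \<gamma>" and "S_theta_lim \<theta> \<beta> m X X0"
  shows "S_theta_lim \<theta> \<gamma> m X X0"
  unfolding S_theta_lim_def
proof (intro allI impI)
  fix \<epsilon> :: real
  assume "0 < \<epsilon>"
  let ?c = "\<lambda>r. real (card {k \<in> lac_I \<theta> r. \<epsilon> \<le> fdist (fdelta m X k) X0})"
  let ?h = "\<lambda>r. real (lac_h \<theta> r)"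
  show "(\<lambda>r. ?c r / ?h r powr \<gamma>) \<longlonglongrightarrow> 0"
  proof (rule Lim_null_comparison)
    show "\<forall>\<^sub>F r in sequentially. norm (?c r / ?h r powr \<gamma>) \<le> ?c r / ?h r powr \<beta>"
    proof (intro always_eventually allI)
      fix r
      show "norm (?c r / ?h r powr \<gamma>) \<le> ?c r / ?h r powr \<beta>"
      proof (cases "lac_h \<theta> r = 0")
        case False
        then have "?h r powr \<beta> \<le> ?h r powr \<gamma>"
          using \<open>\<beta> \<le> \<gamma>\<close> by (intro powr_mono) auto
        with False show ?thesis by (simp add: divide_left_mono)
      qed simp
    qed
    show "(\<lambda>r. ?c r / ?h r powr \<beta>) \<longlonglongrightarrow> 0"
      using assms(2) \<open>0 < \<epsilon>\<close> by (simp add: S_theta_lim_def)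
  qed
qed

theorem corollary2p8:
  fixes X :: "nat \<Rightarrow> fuzzy" and X0 :: fuzzy and \<theta> :: "nat \<Rightarrow> nat"
    and \<beta> p :: real and m :: nat
  assumes "\<forall>k. fuzzy_number (X k)"
    and "fuzzy_number X0"
    and "0 < \<beta>" and "\<beta> \<le> 1"
    and "0 < p"
    and "lacunary \<theta>"
    and "N_theta_lim \<theta> \<beta> p m X X0"
  shows "S_theta_lim \<theta> \<beta> m X X0 \<and> S_theta_lim \<theta> 1 m X X0"
proof
  show S: "S_theta_lim \<theta> \<beta> m X X0"
    using N_theta_lim_imp_S_theta_lim[OF \<open>0 < p\<close> \<open>N_theta_lim \<theta> \<beta> p m X X0\<close>] .
  show "S_theta_lim \<theta> 1 m X X0"
    using S_theta_lim_exponent_mono[OF \<open>\<beta> \<le> 1\<close> S] .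
qed

end
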